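(* Consider joint conditional distributions $p(A_a,B_b|a,b)$ for $a,b\in\{1,2,3\}$ and $A_a,B_b\in\{0,1\}$ such that $A_a=B_b$ with probability 1 whenever $a=b$ and $A_a\neq B_b$ with probability 1 whenever $a\neq b$. If they satisfy the no-signaling conditions that $\sum_{B_b}p(A_a,B_b|a,b)$ is independent of $b$ and $\sum_{A_a}p(A_a,B_b|a,b)$ is independent of $a$, then for all $a\neq b$: $p(0,1|a,b)=p(1,0|a,b)=\tfrac12$, and for all $a=b$: $p(0,0|a,b)=p(1,1|a,b)=\tfrac12$. *)

theory Defs
  imports Complex_Main
begin

end

theory Submission
  imports Defs
begin

text \<open>Write \<open>\<alpha> a\<close> for the probability that Alice outputs 0 on input \<open>a\<close>; by no-signalling it does
not depend on Bob's input. Perfect correlation on equal inputs makes Bob's probability of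
output 0 on input \<open>b\<close> equal to \<open>\<alpha> b\<close>, and perfect anticorrelation on distinct inputs then forces
\<open>\<alpha> a + \<alpha> b = 1\<close> whenever \<open>a \<noteq> b\<close>. Among three inputs this odd cycle of complementary values
only admits \<open>\<alpha> = 1/2\<close>, and all joint probabilities are read off from \<open>\<alpha>\<close>.\<close>

lemma pairwise_complementary_imp_half:
  fixes \<alpha> :: "'a \<Rightarrow> real"
  assumes compl: "\<And>x y. x \<in> S \<Longrightarrow> y \<in> S \<Longrightarrow> x \<noteq> y \<Longrightarrow> \<alpha> x + \<alpha> y = 1"
    and card: "3 \<le> card S" and "x \<in> S"
  shows "\<alpha> x = 1/2"
proof -
  obtain y z where "y \<in> S" "z \<in> S" "distinct [x, y, z]"
    using card \<open>x \<in> S\<close> by (auto simp: card_le_Suc_iff numeral_eq_Suc)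
  then have "\<alpha> x + \<alpha> y = 1" "\<alpha> y + \<alpha> z = 1" "\<alpha> x + \<alpha> z = 1"
    using compl \<open>x \<in> S\<close> by auto
  then show ?thesis by linarith
qed

lemma no_signalling_perfect_correlations_uniform:
  fixes p :: "nat \<Rightarrow> nat \<Rightarrow> 'a \<Rightarrow> 'a \<Rightarrow> real"
  assumes normalized: "\<And>a b. a \<in> S \<Longrightarrow> b \<in> S \<Longrightarrow> (\<Sum>x\<in>{0,1}. \<Sum>y\<in>{0,1}. p x y a b) = 1"
    and corr: "\<And>a. a \<in> S \<Longrightarrow> p 0 1 a a = 0 \<and> p 1 0 a a = 0"
    and anticorr: "\<And>a b. a \<in> S \<Longrightarrow> b \<in> S \<Longrightarrow> a \<noteq> b \<Longrightarrow> p 0 0 a b = 0 \<and> p 1 1 a b = 0"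
    and nosig_A: "\<And>a b b'. a \<in> S \<Longrightarrow> b \<in> S \<Longrightarrow> b' \<in> S \<Longrightarrow>
        (\<Sum>y\<in>{0,1}. p 0 y a b) = (\<Sum>y\<in>{0,1}. p 0 y a b')"
    and nosig_B: "\<And>a a' b. a \<in> S \<Longrightarrow> a' \<in> S \<Longrightarrow> b \<in> S \<Longrightarrow>
        (\<Sum>x\<in>{0,1}. p x 0 a b) = (\<Sum>x\<in>{0,1}. p x 0 a' b)"
    and card: "3 \<le> card S"
  shows "(\<forall>a\<in>S. \<forall>b\<in>S. a \<noteq> b \<longrightarrow> p 0 1 a b = 1/2 \<and> p 1 0 a b = 1/2)
       \<and> (\<forall>a\<in>S. p 0 0 a a = 1/2 \<and> p 1 1 a a = 1/2)"
proof -
  define \<alpha> where "\<alpha> a = p 0 0 a a" for a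
  have alice: "p 0 1 a b = \<alpha> a" if "a \<in> S" "b \<in> S" "a \<noteq> b" for a b
    using nosig_A[of a b a] corr[of a] anticorr[of a b] that by (simp add: \<alpha>_def)
  have bob: "p 1 0 a b = \<alpha> b" if "a \<in> S" "b \<in> S" "a \<noteq> b" for a b
    using nosig_B[of a b b] corr[of b] anticorr[of a b] that by (simp add: \<alpha>_def)
  have compl: "\<alpha> a + \<alpha> b = 1" if "a \<in> S" "b \<in> S" "a \<noteq> b" for a b
    using normalized[of a b] anticorr[of a b] alice[OF that] bob[OF that] that by simp
  have half: "\<alpha> a = 1/2" if "a \<in> S" for a
    using pairwise_complementary_imp_half[OF compl card that] by simp
  have "p 0 1 a b = 1/2 \<and> p 1 0 a b = 1/2" if "a \<in> S" "b \<in> S" "a \<noteq> b" for a b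
    using alice[OF that] bob[OF that] half that by simp
  moreover have "p 0 0 a a = 1/2 \<and> p 1 1 a a = 1/2" if "a \<in> S" for a
    using normalized[of a a] corr[OF that] half[OF that] that by (simp add: \<alpha>_def)
  ultimately show ?thesis by blast
qed

theorem mainTheorem10:
  fixes p :: "nat \<Rightarrow> nat \<Rightarrow> nat \<Rightarrow> nat \<Rightarrow> real"
  assumes nonneg: "\<And>x y a b. x \<in> {0,1} \<Longrightarrow> y \<in> {0,1} \<Longrightarrow> a \<in> {1,2,3} \<Longrightarrow> b \<in> {1,2,3} \<Longrightarrow> p x y a b \<ge> 0"
    and normalized: "\<And>a b. a \<in> {1,2,3} \<Longrightarrow> b \<in> {1,2,3} \<Longrightarrow> (\<Sum>x\<in>{0,1}. \<Sum>y\<in>{0,1}. p x y a b) = 1"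
    and corr: "\<And>x y a. a \<in> {1,2,3} \<Longrightarrow> x \<in> {0,1} \<Longrightarrow> y \<in> {0,1} \<Longrightarrow> x \<noteq> y \<Longrightarrow> p x y a a = 0"
    and anticorr: "\<And>x a b. a \<in> {1,2,3} \<Longrightarrow> b \<in> {1,2,3} \<Longrightarrow> a \<noteq> b \<Longrightarrow> x \<in> {0,1} \<Longrightarrow> p x x a b = 0"
    and nosig_A: "\<And>x a b b'. x \<in> {0,1} \<Longrightarrow> a \<in> {1,2,3} \<Longrightarrow> b \<in> {1,2,3} \<Longrightarrow> b' \<in> {1,2,3} \<Longrightarrow>
        (\<Sum>y\<in>{0,1}. p x y a b) = (\<Sum>y\<in>{0,1}. p x y a b')"
    and nosig_B: "\<And>y a a' b. y \<in> {0,1} \<Longrightarrow> a \<in> {1,2,3} \<Longrightarrow> a' \<in> {1,2,3} \<Longrightarrow> b \<in> {1,2,3} \<Longrightarrow>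
        (\<Sum>x\<in>{0,1}. p x y a b) = (\<Sum>x\<in>{0,1}. p x y a' b)"
  shows "(\<forall>a\<in>{1,2,3}. \<forall>b\<in>{1,2,3}. a \<noteq> b \<longrightarrow> p 0 1 a b = 1/2 \<and> p 1 0 a b = 1/2)
       \<and> (\<forall>a\<in>{1,2,3}. p 0 0 a a = 1/2 \<and> p 1 1 a a = 1/2)"
proof -
  let ?S = "{1, 2, 3 :: nat}"
  have corr': "p 0 1 a a = 0 \<and> p 1 0 a a = 0" if "a \<in> ?S" for a
    using corr[OF that] by simp
  have anticorr': "p 0 0 a b = 0 \<and> p 1 1 a b = 0" if "a \<in> ?S" "b \<in> ?S" "a \<noteq> b" for a b
    using anticorr[OF that] by simp
  have nosig_A': "(\<Sum>y\<in>{0,1}. p 0 y a b) = (\<Sum>y\<in>{0,1}. p 0 y a b')"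
    if "a \<in> ?S" "b \<in> ?S" "b' \<in> ?S" for a b b'
    by (rule nosig_A) (use that in simp_all)
  have nosig_B': "(\<Sum>x\<in>{0,1}. p x 0 a b) = (\<Sum>x\<in>{0,1}. p x 0 a' b)"
    if "a \<in> ?S" "a' \<in> ?S" "b \<in> ?S" for a a' b
    by (rule nosig_B) (use that in simp_all)
  have card: "3 \<le> card ?S" by simp
  show ?thesis
    using no_signalling_perfect_correlations_uniform[OF normalized corr' anticorr' nosig_A' nosig_B' card] .
qed

end
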